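(* Let $X$ be a normed space and $Y$ a Banach space. Let $r,s$ and $\theta$ be nonnegative integer numbers with $p=r+s\neq1,3$. Suppose that an odd mapping $f:X\to Y$ satisfies $$\|D_f(x,y)\|\le\theta\|x\|^r\|y\|^s$$ for all $x,y\in X$. Then there exist a unique additive function $A:X\to Y$ and a unique cubic function $C:X\to Y$ satisfying $$\|f(x)-A(x)-C(x)\|\le\frac{\theta}{12}\left[\frac{1}{|2^p-2|}+\frac{1}{|2^p-8|}\right]\|x\|^p$$ for all $x\in X$.
   Context: For a mapping $f:X\to Y$ define $$D_f(x,y)=3f(x+3y)-f(3x+y)-12[f(x+y)+f(x-y)]+16[f(x)+f(y)]-12f(2y)+4f(2x)$$ for $x,y\in X$. A function $g:X\to Y$ is additive if $g(x+y)=g(x)+g(y)$ for all $x,y\in X$, and cubic if $g(x+2y)-3g(x+y)+3g(x)-g(x-y)=6g(y)$ for all $x,y\in X$. *)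

theory Defs
  imports "HOL-Analysis.Analysis"
begin

definition Dop :: "('a::real_normed_vector \<Rightarrow> 'b::real_normed_vector) \<Rightarrow> 'a \<Rightarrow> 'a \<Rightarrow> 'b" where
  "Dop f x y =
     3 *\<^sub>R f (x + 3 *\<^sub>R y) - f (3 *\<^sub>R x + y)
     - 12 *\<^sub>R (f (x + y) + f (x - y))
     + 16 *\<^sub>R (f x + f y)
     - 12 *\<^sub>R f (2 *\<^sub>R y) + 4 *\<^sub>R f (2 *\<^sub>R x)"

definition cubic :: "('a::real_normed_vector \<Rightarrow> 'b::real_normed_vector) \<Rightarrow> bool" where
  "cubic g \<longleftrightarrow> (\<forall>x y. g (x + 2 *\<^sub>R y) - 3 *\<^sub>R g (x + y) + 3 *\<^sub>R g x - g (x - y) = 6 *\<^sub>R g y)"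

end

theory Submission
  imports Defs
begin

(* Putting x = y in D_f gives f(4x) - 10 f(2x) + 16 f(x) = O(|x|^p), so g(x) = f(2x) - 8 f(x)
   satisfies g(2x) ~ 2 g(x) and h(x) = f(2x) - 2 f(x) satisfies h(2x) ~ 8 h(x). Hyers' direct
   method (iterating x -> 2x, or x -> x/2 when 2^p exceeds the factor) turns g and h into exact
   solutions A0, C0 of D = 0 with A0(2x) = 2 A0(x) and C0(2x) = 8 C0(x), which are therefore
   additive and cubic, and f = (h - g)/6 is close to (C0 - A0)/6.
   For uniqueness, two decompositions differ by a + c with a additive, c cubic and
   |a(x) + c(x)| = O(|x|^p); rescaling x by 2^n or 2^-n separates the degrees 1, 3 and p. *)

lemma scaleR_homogeneous_power:
  fixes F :: "'a::real_vector \<Rightarrow> 'b::real_vector"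
  assumes "\<And>y. F (t *\<^sub>R y) = k *\<^sub>R F y"
  shows "F (t ^ n *\<^sub>R y) = k ^ n *\<^sub>R F y"
proof (induction n)
  case (Suc n)
  have "F (t ^ Suc n *\<^sub>R y) = k *\<^sub>R F (t ^ n *\<^sub>R y)"
    using assms[of "t ^ n *\<^sub>R y"] by simp
  with Suc show ?case by simp
qed simp

lemma cubic_scaleR:
  fixes g :: "'a::real_normed_vector \<Rightarrow> 'b::real_normed_vector"
  assumes "cubic g"
  shows "cubic (\<lambda>x. k *\<^sub>R g x)"
  unfolding cubic_def
proof (intro allI)
  fix x y
  have "k *\<^sub>R (g (x + 2 *\<^sub>R y) - 3 *\<^sub>R g (x + y) + 3 *\<^sub>R g x - g (x - y)) = k *\<^sub>R (6 *\<^sub>R g y)"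
    using assms unfolding cubic_def by simp
  then show "k *\<^sub>R g (x + 2 *\<^sub>R y) - 3 *\<^sub>R k *\<^sub>R g (x + y) + 3 *\<^sub>R k *\<^sub>R g x - k *\<^sub>R g (x - y) = 6 *\<^sub>R k *\<^sub>R g y"
    by (simp add: algebra_simps)
qed

lemma cubic_diff:
  fixes g h :: "'a::real_normed_vector \<Rightarrow> 'b::real_normed_vector"
  assumes "cubic g" and "cubic h"
  shows "cubic (\<lambda>x. g x - h x)"
  using assms unfolding cubic_def by (simp add: algebra_simps)

lemma additive_scaleR:
  fixes g :: "'a::real_vector \<Rightarrow> 'b::real_vector"
  assumes "Modules.additive g"
  shows "Modules.additive (\<lambda>x. k *\<^sub>R g x)"
  by (rule additive.intro) (simp add: additive.add[OF assms] scaleR_add_right)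

lemma additive_diff:
  fixes g h :: "'a::real_vector \<Rightarrow> 'b::real_vector"
  assumes "Modules.additive g" and "Modules.additive h"
  shows "Modules.additive (\<lambda>x. g x - h x)"
  by (rule additive.intro) (simp add: additive.add[OF assms(1)] additive.add[OF assms(2)])

lemma cubic_scaleR_2:
  fixes g :: "'a::real_normed_vector \<Rightarrow> 'b::real_normed_vector"
  assumes "cubic g"
  shows "g (2 *\<^sub>R y) = 8 *\<^sub>R g y"
proof -
  have C: "g (x + 2 *\<^sub>R y) - 3 *\<^sub>R g (x + y) + 3 *\<^sub>R g x - g (x - y) = 6 *\<^sub>R g y" for x y
    using assms unfolding cubic_def by blast
  have g0: "g 0 = 0" using C[of 0 0] by simp
  have at_0: "g (2 *\<^sub>R z) - 3 *\<^sub>R g z - g (- z) = 6 *\<^sub>R g z" for z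
    using C[of 0 z] g0 by simp
  have at_minus: "g z + 3 *\<^sub>R g (- z) - g (- (2 *\<^sub>R z)) = 6 *\<^sub>R g z" for z
  proof -
    have "- z + 2 *\<^sub>R z = z" "- z - z = - (2 *\<^sub>R z)" by (simp_all add: algebra_simps scaleR_2)
    then show ?thesis using C[of "- z" z] g0 by simp
  qed
  have "g (- (2 *\<^sub>R y)) = g y + 3 *\<^sub>R g (- y) - 6 *\<^sub>R g y"
    using at_minus[of y] by (simp add: algebra_simps)
  then have "6 *\<^sub>R (g y + g (- y)) = 0"
    using at_0[of "- y"] by (simp add: algebra_simps)
  then have "g (- y) = - g y" by (simp add: add.inverse_unique)
  then have "g (2 *\<^sub>R y) = 6 *\<^sub>R g y + 3 *\<^sub>R g y - g y"
    using at_0[of y] by (simp add: algebra_simps)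
  also have "\<dots> = 8 *\<^sub>R g y" by norm
  finally show ?thesis .
qed

lemma Dop_swap_combination:
  fixes F :: "'a::real_normed_vector \<Rightarrow> 'b::real_normed_vector"
  assumes odd: "\<And>x. F (- x) = - F x"
  shows "3 *\<^sub>R Dop F x y + Dop F y x
    = 8 *\<^sub>R F (x + 3 *\<^sub>R y) - 48 *\<^sub>R F (x + y) - 24 *\<^sub>R F (x - y)
      + 64 *\<^sub>R F x + 64 *\<^sub>R F y - 32 *\<^sub>R F (2 *\<^sub>R y)"
proof -
  have "F (y - x) = - F (x - y)" using odd[of "x - y"] by simp
  moreover have "y + 3 *\<^sub>R x = 3 *\<^sub>R x + y" "3 *\<^sub>R y + x = x + 3 *\<^sub>R y" "y + x = x + y"
    by (simp_all add: add.commute)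
  ultimately show ?thesis unfolding Dop_def by (simp only:) norm
qed

lemma Dop_eq_0_double_add:
  fixes F :: "'a::real_normed_vector \<Rightarrow> 'b::real_normed_vector"
  assumes odd: "\<And>x. F (- x) = - F x" and dbl: "\<And>x. F (2 *\<^sub>R x) = 2 *\<^sub>R F x"
    and D: "\<And>x y. Dop F x y = 0"
  shows "F (2 *\<^sub>R u + v) = 6 *\<^sub>R F u - 3 *\<^sub>R F v - 4 *\<^sub>R F (u - v)"
proof -
  have shift: "F (x + 3 *\<^sub>R y) = 6 *\<^sub>R F (x + y) + 3 *\<^sub>R F (x - y) - 8 *\<^sub>R F x" for x y
  proof -
    have "8 *\<^sub>R (F (x + 3 *\<^sub>R y) - (6 *\<^sub>R F (x + y) + 3 *\<^sub>R F (x - y) - 8 *\<^sub>R F x)) = 3 *\<^sub>R Dop F x y + Dop F y x"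
      unfolding Dop_swap_combination[of F x y, OF odd] dbl by norm
    then show ?thesis by (simp add: D)
  qed
  define x y where "x = (1/2) *\<^sub>R (u - v)" and "y = (1/2) *\<^sub>R (u + v)"
  have "x + 3 *\<^sub>R y = 2 *\<^sub>R u + v" "x + y = u" "x - y = - v" "u - v = 2 *\<^sub>R x"
    unfolding x_def y_def by norm+
  then show ?thesis using shift[of x y] by (simp add: odd dbl)
qed

lemma additive_if_Dop_eq_0:
  fixes F :: "'a::real_normed_vector \<Rightarrow> 'b::real_normed_vector"
  assumes odd: "\<And>x. F (- x) = - F x" and dbl: "\<And>x. F (2 *\<^sub>R x) = 2 *\<^sub>R F x"
    and D: "\<And>x y. Dop F x y = 0"
  shows "Modules.additive F"
proof
  fix a b :: 'a
  note double_add = Dop_eq_0_double_add[OF odd dbl D]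
  have "2 *\<^sub>R b + (a - b) = a + b" "b - (a - b) = 2 *\<^sub>R b - a"
    "2 *\<^sub>R a + (b - a) = a + b" "a - (b - a) = 2 *\<^sub>R a - b"
    "2 *\<^sub>R a + - b = 2 *\<^sub>R a - b" "2 *\<^sub>R b + - a = 2 *\<^sub>R b - a"
    by norm+
  note args = this
  have odd_diff: "F (b - a) = - F (a - b)" using odd[of "a - b"] by simp
  have z1: "F (a + b) - (6 *\<^sub>R F b - 3 *\<^sub>R F (a - b) - 4 *\<^sub>R F (2 *\<^sub>R b - a)) = 0"
    using double_add[of b "a - b"] unfolding args by simp
  have z2: "F (a + b) - (6 *\<^sub>R F a + 3 *\<^sub>R F (a - b) - 4 *\<^sub>R F (2 *\<^sub>R a - b)) = 0"
    using double_add[of a "b - a"] unfolding args odd_diff by simp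
  have z3: "F (2 *\<^sub>R a - b) - (6 *\<^sub>R F a + 3 *\<^sub>R F b - 4 *\<^sub>R F (a + b)) = 0"
    using double_add[of a "- b"] unfolding args by (simp add: odd)
  have z4: "F (2 *\<^sub>R b - a) - (6 *\<^sub>R F b + 3 *\<^sub>R F a - 4 *\<^sub>R F (a + b)) = 0"
    using double_add[of b "- a"] unfolding args by (simp add: odd add.commute)
  have "(-30) *\<^sub>R (F (a + b) - (F a + F b)) =
     (F (a + b) - (6 *\<^sub>R F b - 3 *\<^sub>R F (a - b) - 4 *\<^sub>R F (2 *\<^sub>R b - a)))
   + (F (a + b) - (6 *\<^sub>R F a + 3 *\<^sub>R F (a - b) - 4 *\<^sub>R F (2 *\<^sub>R a - b)))
   - 4 *\<^sub>R (F (2 *\<^sub>R a - b) - (6 *\<^sub>R F a + 3 *\<^sub>R F b - 4 *\<^sub>R F (a + b)))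
   - 4 *\<^sub>R (F (2 *\<^sub>R b - a) - (6 *\<^sub>R F b + 3 *\<^sub>R F a - 4 *\<^sub>R F (a + b)))"
    by norm
  then show "F (a + b) = F a + F b" unfolding z1 z2 z3 z4 by simp
qed

lemma cubic_if_Dop_eq_0:
  fixes F :: "'a::real_normed_vector \<Rightarrow> 'b::real_normed_vector"
  assumes odd: "\<And>x. F (- x) = - F x" and dbl: "\<And>x. F (2 *\<^sub>R x) = 8 *\<^sub>R F x"
    and D: "\<And>x y. Dop F x y = 0"
  shows "cubic F"
proof -
  have shift: "F (x + 3 *\<^sub>R y) = 6 *\<^sub>R F (x + y) + 3 *\<^sub>R F (x - y) - 8 *\<^sub>R F x + 24 *\<^sub>R F y" for x y
  proof -
    have "8 *\<^sub>R (F (x + 3 *\<^sub>R y) - (6 *\<^sub>R F (x + y) + 3 *\<^sub>R F (x - y) - 8 *\<^sub>R F x + 24 *\<^sub>R F y)) = 3 *\<^sub>R Dop F x y + Dop F y x"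
      unfolding Dop_swap_combination[of F x y, OF odd] dbl by norm
    then show ?thesis by (simp add: D)
  qed
  show ?thesis unfolding cubic_def
  proof (intro allI)
    fix x y :: 'a
    have "x - y + 3 *\<^sub>R y = x + 2 *\<^sub>R y" "x - y + y = x" "x - y - y = x - 2 *\<^sub>R y"
      "x + y + 3 *\<^sub>R (- y) = x - 2 *\<^sub>R y" "x + y + - y = x" "x + y - - y = x + 2 *\<^sub>R y"
      by norm+
    note args = this
    have z1: "F (x + 2 *\<^sub>R y) - (6 *\<^sub>R F x + 3 *\<^sub>R F (x - 2 *\<^sub>R y) - 8 *\<^sub>R F (x - y) + 24 *\<^sub>R F y) = 0"
      using shift[of "x - y" y] unfolding args by simp
    have z2: "F (x - 2 *\<^sub>R y) - (6 *\<^sub>R F x + 3 *\<^sub>R F (x + 2 *\<^sub>R y) - 8 *\<^sub>R F (x + y) - 24 *\<^sub>R F y) = 0"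
      using shift[of "x + y" "- y"] unfolding args by (simp add: odd)
    have "(-8) *\<^sub>R (F (x + 2 *\<^sub>R y) - 3 *\<^sub>R F (x + y) + 3 *\<^sub>R F x - F (x - y) - 6 *\<^sub>R F y) =
      (F (x + 2 *\<^sub>R y) - (6 *\<^sub>R F x + 3 *\<^sub>R F (x - 2 *\<^sub>R y) - 8 *\<^sub>R F (x - y) + 24 *\<^sub>R F y))
      + 3 *\<^sub>R (F (x - 2 *\<^sub>R y) - (6 *\<^sub>R F x + 3 *\<^sub>R F (x + 2 *\<^sub>R y) - 8 *\<^sub>R F (x + y) - 24 *\<^sub>R F y))"
      by norm
    then show "F (x + 2 *\<^sub>R y) - 3 *\<^sub>R F (x + y) + 3 *\<^sub>R F x - F (x - y) = 6 *\<^sub>R F y"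
      unfolding z1 z2 by simp
  qed
qed

definition hyers_seq :: "('a::real_vector \<Rightarrow> 'b::real_vector) \<Rightarrow> real \<Rightarrow> real \<Rightarrow> nat \<Rightarrow> 'a \<Rightarrow> 'b"
  where "hyers_seq \<phi> c b n x = (1 / b ^ n) *\<^sub>R \<phi> (c ^ n *\<^sub>R x)"

lemma norm_hyers_seq_step_le:
  fixes \<phi> :: "'a::real_normed_vector \<Rightarrow> 'b::real_normed_vector" and c b \<delta> :: real and p :: nat
  assumes c: "c > 0" and b: "b > 0"
    and bnd: "\<And>x. norm (\<phi> (c *\<^sub>R x) - b *\<^sub>R \<phi> x) \<le> \<delta> * norm x ^ p"
  shows "norm (hyers_seq \<phi> c b (Suc k) x - hyers_seq \<phi> c b k x) \<le> \<delta> / b * norm x ^ p * (c ^ p / b) ^ k"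
proof -
  have "hyers_seq \<phi> c b (Suc k) x - hyers_seq \<phi> c b k x
      = (1 / b ^ Suc k) *\<^sub>R (\<phi> (c *\<^sub>R (c ^ k *\<^sub>R x)) - b *\<^sub>R \<phi> (c ^ k *\<^sub>R x))"
    unfolding hyers_seq_def using b by (simp add: scaleR_diff_right)
  then have "norm (hyers_seq \<phi> c b (Suc k) x - hyers_seq \<phi> c b k x)
      = (1 / b ^ Suc k) * norm (\<phi> (c *\<^sub>R (c ^ k *\<^sub>R x)) - b *\<^sub>R \<phi> (c ^ k *\<^sub>R x))"
    using b by simp
  also have "\<dots> \<le> (1 / b ^ Suc k) * (\<delta> * norm (c ^ k *\<^sub>R x) ^ p)"
    using bnd[of "c ^ k *\<^sub>R x"] b by (intro mult_left_mono) auto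
  also have "\<dots> = \<delta> / b * norm x ^ p * (c ^ p / b) ^ k"
    using c b by (simp add: power_mult_distrib power_divide field_simps flip: power_mult)
  finally show ?thesis .
qed

lemma hyers_limit:
  fixes \<phi> :: "'a::real_normed_vector \<Rightarrow> 'b::banach" and c b \<delta> :: real and p :: nat
  assumes c: "c > 0" and b: "b > 0" and q: "c ^ p < b"
    and bnd: "\<And>x. norm (\<phi> (c *\<^sub>R x) - b *\<^sub>R \<phi> x) \<le> \<delta> * norm x ^ p"
  obtains T where "\<And>x. (\<lambda>n. hyers_seq \<phi> c b n x) \<longlonglongrightarrow> T x"
    and "\<And>x. T (c *\<^sub>R x) = b *\<^sub>R T x"
    and "\<And>x. norm (\<phi> x - T x) \<le> \<delta> / (b - c ^ p) * norm x ^ p"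
proof -
  define Q where "Q = c ^ p / b"
  have Q: "0 \<le> Q" "Q < 1" unfolding Q_def using c b q by simp_all
  then have nQ: "norm Q < 1" by simp
  define d where "d x k = hyers_seq \<phi> c b (Suc k) x - hyers_seq \<phi> c b k x" for x k
  have d_bound: "norm (d x k) \<le> \<delta> / b * norm x ^ p * Q ^ k" for x k
    unfolding d_def Q_def by (rule norm_hyers_seq_step_le[OF c b bnd])
  have geometric: "summable (\<lambda>k. \<delta> / b * norm x ^ p * Q ^ k)" for x
    by (intro summable_mult summable_geometric nQ)
  have summable_norm_d: "summable (\<lambda>k. norm (d x k))" for x
    by (rule summable_comparison_test'[OF geometric[of x]]) (use d_bound in simp)
  then have summable_d: "summable (d x)" for x
    by (rule summable_norm_cancel)
  define T where "T x = \<phi> x + suminf (d x)" for x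
  have telescope: "hyers_seq \<phi> c b n x = \<phi> x + (\<Sum>k<n. d x k)" for n x
  proof -
    have "(\<Sum>k<n. d x k) = hyers_seq \<phi> c b n x - hyers_seq \<phi> c b 0 x"
      unfolding d_def by (rule sum_lessThan_telescope)
    then show ?thesis by (simp add: hyers_seq_def)
  qed
  have lim: "(\<lambda>n. hyers_seq \<phi> c b n x) \<longlonglongrightarrow> T x" for x
    unfolding telescope T_def by (intro tendsto_add tendsto_const summable_LIMSEQ summable_d)
  show ?thesis
  proof (rule that[OF lim])
    show "T (c *\<^sub>R x) = b *\<^sub>R T x" for x
    proof -
      have "hyers_seq \<phi> c b n (c *\<^sub>R x) = b *\<^sub>R hyers_seq \<phi> c b (Suc n) x" for n
        unfolding hyers_seq_def using b by (simp add: mult.commute)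
      then have "(\<lambda>n. hyers_seq \<phi> c b n (c *\<^sub>R x)) \<longlonglongrightarrow> b *\<^sub>R T x"
        using tendsto_scaleR[OF tendsto_const LIMSEQ_Suc[OF lim[of x]], of b] by simp
      then show ?thesis using lim[of "c *\<^sub>R x"] LIMSEQ_unique by blast
    qed
    show "norm (\<phi> x - T x) \<le> \<delta> / (b - c ^ p) * norm x ^ p" for x
    proof -
      have "norm (\<phi> x - T x) = norm (suminf (d x))" unfolding T_def by (simp add: norm_minus_commute)
      also have "\<dots> \<le> (\<Sum>k. norm (d x k))" by (rule summable_norm[OF summable_norm_d])
      also have "\<dots> \<le> (\<Sum>k. \<delta> / b * norm x ^ p * Q ^ k)"
        by (rule suminf_le[OF d_bound summable_norm_d geometric])
      also have "\<dots> = \<delta> / b * norm x ^ p / (1 - Q)"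
        using suminf_mult[OF summable_geometric[OF nQ], of "\<delta> / b * norm x ^ p"] suminf_geometric[OF nQ]
        by simp
      also have "\<dots> = \<delta> / (b - c ^ p) * norm x ^ p"
        using b Q unfolding Q_def by (simp add: field_simps)
      finally show ?thesis .
    qed
  qed
qed

lemma Dop_limit_eq_0:
  fixes \<phi> T :: "'a::real_normed_vector \<Rightarrow> 'b::real_normed_vector" and c b M :: real and r s :: nat
  assumes c: "c > 0" and b: "b > 0" and q: "c ^ (r + s) < b"
    and lim: "\<And>x. (\<lambda>n. hyers_seq \<phi> c b n x) \<longlonglongrightarrow> T x"
    and approx: "\<And>x y. norm (Dop \<phi> x y) \<le> M * norm x ^ r * norm y ^ s"
  shows "Dop T x y = 0"
proof -
  define Q where "Q = c ^ (r + s) / b"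
  have nQ: "norm Q < 1" unfolding Q_def using c b q by simp
  have "(\<lambda>n. Dop (hyers_seq \<phi> c b n) x y) \<longlonglongrightarrow> Dop T x y"
    unfolding Dop_def by (intro tendsto_intros lim)
  moreover have "(\<lambda>n. Dop (hyers_seq \<phi> c b n) x y) \<longlonglongrightarrow> 0"
  proof (rule Lim_null_comparison)
    show "\<forall>\<^sub>F n in sequentially. norm (Dop (hyers_seq \<phi> c b n) x y) \<le> M * norm x ^ r * norm y ^ s * Q ^ n"
    proof (intro always_eventually allI)
      fix n
      have "Dop (hyers_seq \<phi> c b n) x y = (1 / b ^ n) *\<^sub>R Dop \<phi> (c ^ n *\<^sub>R x) (c ^ n *\<^sub>R y)"
        unfolding Dop_def hyers_seq_def by (simp add: algebra_simps)
      then have "norm (Dop (hyers_seq \<phi> c b n) x y) = (1 / b ^ n) * norm (Dop \<phi> (c ^ n *\<^sub>R x) (c ^ n *\<^sub>R y))"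
        using b by simp
      also have "\<dots> \<le> (1 / b ^ n) * (M * norm (c ^ n *\<^sub>R x) ^ r * norm (c ^ n *\<^sub>R y) ^ s)"
        using b by (intro mult_left_mono approx) simp
      also have "\<dots> = M * norm x ^ r * norm y ^ s * Q ^ n"
        using c b unfolding Q_def
        by (simp add: power_mult_distrib power_divide power_add field_simps flip: power_mult)
      finally show "norm (Dop (hyers_seq \<phi> c b n) x y) \<le> M * norm x ^ r * norm y ^ s * Q ^ n" .
    qed
    show "(\<lambda>n. M * norm x ^ r * norm y ^ s * Q ^ n) \<longlonglongrightarrow> 0"
      using tendsto_mult_right_zero[OF LIMSEQ_power_zero[OF nQ]] by simp
  qed
  ultimately show ?thesis using LIMSEQ_unique by blast
qed

lemma hyers_Dop_solution:
  fixes \<phi> :: "'a::real_normed_vector \<Rightarrow> 'b::banach" and c b \<delta> M :: real and r s :: nat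
  assumes c: "c > 0" and b: "b > 0" and q: "c ^ (r + s) < b"
    and bnd: "\<And>x. norm (\<phi> (c *\<^sub>R x) - b *\<^sub>R \<phi> x) \<le> \<delta> * norm x ^ (r + s)"
    and odd: "\<And>x. \<phi> (- x) = - \<phi> x"
    and approx: "\<And>x y. norm (Dop \<phi> x y) \<le> M * norm x ^ r * norm y ^ s"
  obtains T where "\<And>x. T (- x) = - T x" and "\<And>x y. Dop T x y = 0"
    and "\<And>x. T (c *\<^sub>R x) = b *\<^sub>R T x"
    and "\<And>x. norm (\<phi> x - T x) \<le> \<delta> / (b - c ^ (r + s)) * norm x ^ (r + s)"
proof -
  obtain T where lim: "\<And>x. (\<lambda>n. hyers_seq \<phi> c b n x) \<longlonglongrightarrow> T x"
    and hom: "\<And>x. T (c *\<^sub>R x) = b *\<^sub>R T x"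
    and est: "\<And>x. norm (\<phi> x - T x) \<le> \<delta> / (b - c ^ (r + s)) * norm x ^ (r + s)"
    using hyers_limit[OF c b q bnd] by blast
  have odd_T: "T (- x) = - T x" for x
  proof -
    have "(\<lambda>n. hyers_seq \<phi> c b n (- x)) \<longlonglongrightarrow> - T x"
      using tendsto_minus[OF lim[of x]] by (simp add: hyers_seq_def odd)
    then show ?thesis using lim[of "- x"] LIMSEQ_unique by blast
  qed
  show thesis by (rule that[OF odd_T Dop_limit_eq_0[OF c b q lim approx] hom est])
qed

lemma norm_halving_defect_le:
  fixes \<phi> :: "'a::real_normed_vector \<Rightarrow> 'b::real_normed_vector" and a \<epsilon> :: real and p :: nat
  assumes a: "a > 0"
    and bnd: "\<And>x. norm (\<phi> (2 *\<^sub>R x) - a *\<^sub>R \<phi> x) \<le> \<epsilon> * norm x ^ p"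
  shows "norm (\<phi> ((1/2) *\<^sub>R x) - (1/a) *\<^sub>R \<phi> x) \<le> \<epsilon> / (a * 2 ^ p) * norm x ^ p"
proof -
  define y where "y = (1/2::real) *\<^sub>R x"
  have "\<phi> y - (1/a) *\<^sub>R \<phi> (2 *\<^sub>R y) = - (1/a) *\<^sub>R (\<phi> (2 *\<^sub>R y) - a *\<^sub>R \<phi> y)"
    using a by (simp add: algebra_simps)
  then have "norm (\<phi> y - (1/a) *\<^sub>R \<phi> (2 *\<^sub>R y)) = (1/a) * norm (\<phi> (2 *\<^sub>R y) - a *\<^sub>R \<phi> y)"
    using a by simp
  also have "\<dots> \<le> (1/a) * (\<epsilon> * norm y ^ p)" using a bnd[of y] by (intro mult_left_mono) auto
  also have "\<dots> = \<epsilon> / (a * 2 ^ p) * norm x ^ p"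
    unfolding y_def using a by (simp add: power_divide)
  finally show ?thesis by (simp add: y_def)
qed

lemma Dop_doubling_stability:
  fixes \<phi> :: "'a::real_normed_vector \<Rightarrow> 'b::banach" and a \<epsilon> M :: real and r s :: nat
  assumes a: "a > 0" and ne: "(2::real) ^ (r + s) \<noteq> a"
    and bnd: "\<And>x. norm (\<phi> (2 *\<^sub>R x) - a *\<^sub>R \<phi> x) \<le> \<epsilon> * norm x ^ (r + s)"
    and odd: "\<And>x. \<phi> (- x) = - \<phi> x"
    and approx: "\<And>x y. norm (Dop \<phi> x y) \<le> M * norm x ^ r * norm y ^ s"
  obtains T where "\<And>x. T (- x) = - T x" and "\<And>x y. Dop T x y = 0"
    and "\<And>x. T (2 *\<^sub>R x) = a *\<^sub>R T x"
    and "\<And>x. norm (\<phi> x - T x) \<le> \<epsilon> / \<bar>a - 2 ^ (r + s)\<bar> * norm x ^ (r + s)"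
proof (cases "(2::real) ^ (r + s) < a")
  case True
  have two: "(0::real) < 2" by simp
  obtain T where T: "\<And>x. T (- x) = - T x" "\<And>x y. Dop T x y = 0" "\<And>x. T (2 *\<^sub>R x) = a *\<^sub>R T x"
    "\<And>x. norm (\<phi> x - T x) \<le> \<epsilon> / (a - 2 ^ (r + s)) * norm x ^ (r + s)"
    using hyers_Dop_solution[OF two a True bnd odd approx] by blast
  have "\<bar>a - 2 ^ (r + s)\<bar> = a - 2 ^ (r + s)" using True by simp
  with T(4) have "norm (\<phi> x - T x) \<le> \<epsilon> / \<bar>a - 2 ^ (r + s)\<bar> * norm x ^ (r + s)" for x
    by metis
  then show thesis by (rule that[OF T(1-3)])
next
  case False
  with ne have lt: "a < (2::real) ^ (r + s)" by simp
  \<comment> \<open>Run the iteration backwards, with the rescaling by 1/2 instead of 2.\<close>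
  have q: "(1/2::real) ^ (r + s) < 1 / a" using lt a by (simp add: power_divide divide_simps)
  have bnd_half: "norm (\<phi> ((1/2) *\<^sub>R x) - (1/a) *\<^sub>R \<phi> x) \<le> \<epsilon> / (a * 2 ^ (r + s)) * norm x ^ (r + s)" for x
    by (rule norm_halving_defect_le[OF a bnd])
  have half: "(0::real) < 1/2" and inv_a: "0 < 1/a" using a by simp_all
  obtain T where T: "\<And>x. T (- x) = - T x" "\<And>x y. Dop T x y = 0"
    "\<And>x. T ((1/2) *\<^sub>R x) = (1/a) *\<^sub>R T x"
    "\<And>x. norm (\<phi> x - T x) \<le> \<epsilon> / (a * 2 ^ (r + s)) / (1/a - (1/2) ^ (r + s)) * norm x ^ (r + s)"
    using hyers_Dop_solution[OF half inv_a q bnd_half odd approx] by blast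
  have "T (2 *\<^sub>R x) = a *\<^sub>R T x" for x
    using T(3)[of "2 *\<^sub>R x"] a by simp
  moreover have "\<epsilon> / (a * 2 ^ (r + s)) / (1/a - (1/2) ^ (r + s)) = \<epsilon> / \<bar>a - 2 ^ (r + s)\<bar>"
    using lt a by (simp add: power_divide field_simps)
  with T(4) have "norm (\<phi> x - T x) \<le> \<epsilon> / \<bar>a - 2 ^ (r + s)\<bar> * norm x ^ (r + s)" for x
    by metis
  ultimately show thesis by (rule that[OF T(1-2)])
qed

lemma dominant_term_eq_0:
  fixes v w :: "'b::real_normed_vector" and t u \<rho> K :: real
  assumes bnd: "\<And>n. norm (t ^ n *\<^sub>R v + u ^ n *\<^sub>R w) \<le> K * \<rho> ^ n"
    and u: "\<bar>t\<bar> < u" and \<rho>: "0 \<le> \<rho>" "\<rho> < u"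
  shows "w = 0"
proof -
  have u_pos: "u > 0" using u by linarith
  have ub: "norm w \<le> K * (\<rho> / u) ^ n + (\<bar>t\<bar> / u) ^ n * norm v" for n
  proof -
    have "w = (1 / u ^ n) *\<^sub>R (t ^ n *\<^sub>R v + u ^ n *\<^sub>R w) - (t / u) ^ n *\<^sub>R v"
      using u_pos by (simp add: scaleR_add_right power_divide)
    then have "norm w \<le> norm ((1 / u ^ n) *\<^sub>R (t ^ n *\<^sub>R v + u ^ n *\<^sub>R w)) + norm ((t / u) ^ n *\<^sub>R v)"
      by (metis norm_triangle_ineq4)
    also have "\<dots> = (1 / u ^ n) * norm (t ^ n *\<^sub>R v + u ^ n *\<^sub>R w) + (\<bar>t\<bar> / u) ^ n * norm v"
      using u_pos by (simp add: power_abs abs_divide)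
    also have "\<dots> \<le> (1 / u ^ n) * (K * \<rho> ^ n) + (\<bar>t\<bar> / u) ^ n * norm v"
      using u_pos bnd[of n] by (intro add_right_mono mult_left_mono) auto
    finally show ?thesis by (simp add: power_divide)
  qed
  have "(\<lambda>n. K * (\<rho> / u) ^ n + (\<bar>t\<bar> / u) ^ n * norm v) \<longlonglongrightarrow> K * 0 + 0 * norm v"
    using u_pos u \<rho> by (intro tendsto_intros LIMSEQ_power_zero) simp_all
  then have "norm w \<le> K * 0 + 0 * norm v"
    by (rule LIMSEQ_le_const) (use ub in auto)
  then show ?thesis by simp
qed

lemma norm_homogeneous_sum_le:
  fixes F G :: "'a::real_normed_vector \<Rightarrow> 'b::real_normed_vector" and t \<alpha> \<beta> :: real
  assumes bnd: "\<And>x. norm (F x + G x) \<le> M * norm x ^ p" and "t > 0"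
    and F: "\<And>y. F (t *\<^sub>R y) = \<alpha> *\<^sub>R F y" and G: "\<And>y. G (t *\<^sub>R y) = \<beta> *\<^sub>R G y"
  shows "norm (\<alpha> ^ n *\<^sub>R F x + \<beta> ^ n *\<^sub>R G x) \<le> M * norm x ^ p * (t ^ p) ^ n"
proof -
  have "norm (t ^ n *\<^sub>R x) ^ p = (t ^ p) ^ n * norm x ^ p"
    using \<open>t > 0\<close> by (simp add: power_mult_distrib mult.commute flip: power_mult)
  with bnd[of "t ^ n *\<^sub>R x"] show ?thesis
    by (simp add: scaleR_homogeneous_power[of F, OF F] scaleR_homogeneous_power[of G, OF G] mult_ac)
qed

lemma additive_plus_cubic_eq_0:
  fixes a c :: "'a::real_normed_vector \<Rightarrow> 'b::real_normed_vector" and p :: nat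
  assumes add: "Modules.additive a" and cub: "cubic c" and p: "p \<noteq> 1" "p \<noteq> 3"
    and bnd: "\<And>x. norm (a x + c x) \<le> M * norm x ^ p"
  shows "a x = 0 \<and> c x = 0"
proof -
  have a2: "a (2 *\<^sub>R y) = 2 *\<^sub>R a y" for y
    using additive.add[OF add, of y y] by (simp add: scaleR_2)
  have c2: "c (2 *\<^sub>R y) = 8 *\<^sub>R c y" for y
    using cubic_scaleR_2[OF cub] .
  have a_half: "a ((1/2) *\<^sub>R y) = (1/2) *\<^sub>R a y" for y
    using a2[of "(1/2) *\<^sub>R y"] by simp
  have c_half: "c ((1/2) *\<^sub>R y) = (1/8) *\<^sub>R c y" for y
    using c2[of "(1/2) *\<^sub>R y"] by simp
  have up: "norm ((2::real) ^ n *\<^sub>R a x + 8 ^ n *\<^sub>R c x) \<le> M * norm x ^ p * (2 ^ p) ^ n" for n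
    using norm_homogeneous_sum_le[OF bnd _ a2 c2] by simp
  have down: "norm ((1/8::real) ^ n *\<^sub>R c x + (1/2) ^ n *\<^sub>R a x) \<le> M * norm x ^ p * ((1/2) ^ p) ^ n" for n
    using norm_homogeneous_sum_le[OF bnd _ a_half c_half] by (simp add: add.commute power_divide)
  \<comment> \<open>Dilating by 2 the cubic part outgrows both the additive part and the bound when p < 3;
    contracting by 1/2 the additive part does so when p > 3.\<close>
  show ?thesis
  proof (cases "p < 3")
    case True
    then have "(2::real) ^ p \<le> 2 ^ 2" by (intro power_increasing) auto
    then have c0: "c x = 0"
      using up by (intro dominant_term_eq_0[of 2 "a x" 8 "c x" _ "2 ^ p"]) simp_all
    have "a x = 0"
    proof (cases "p = 0")
      case True
      then show ?thesis using up c0 by (intro dominant_term_eq_0[of 0 0 2 "a x" _ 1]) simp_all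
    next
      case False
      with True p have "p = 2" by linarith
      then show ?thesis
        using down c0 by (intro dominant_term_eq_0[of 0 0 "1/2" "a x" _ "1/4"]) (simp_all add: power_divide)
    qed
    with c0 show ?thesis by simp
  next
    case False
    with p have p4: "p \<ge> 4" by linarith
    then have "(1/2::real) ^ p \<le> (1/2) ^ 4" by (intro power_decreasing) auto
    then have small: "(1/2::real) ^ p < 1/8" by (simp add: power_divide)
    then have a0: "a x = 0"
      using down by (intro dominant_term_eq_0[of "1/8" "c x" "1/2" "a x" _ "(1/2) ^ p"]) simp_all
    then have "c x = 0"
      using down small by (intro dominant_term_eq_0[of 0 0 "1/8" "c x" _ "(1/2) ^ p"]) simp_all
    with a0 show ?thesis by simp
  qed
qed

lemma Dop_diagonal:
  fixes f :: "'a::real_normed_vector \<Rightarrow> 'b::real_normed_vector"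
  assumes odd: "\<And>x. f (- x) = - f x"
  shows "Dop f x x = 2 *\<^sub>R (f (2 *\<^sub>R (2 *\<^sub>R x)) - 10 *\<^sub>R f (2 *\<^sub>R x) + 16 *\<^sub>R f x)"
proof -
  have f0: "f 0 = - f 0" using odd[of 0] by simp
  have "2 *\<^sub>R f 0 = f 0 + - f 0" unfolding scaleR_2 by (subst (2) f0) (rule refl)
  then have "f 0 = 0" by simp
  moreover have "x + 3 *\<^sub>R x = 2 *\<^sub>R (2 *\<^sub>R x)" "3 *\<^sub>R x + x = 2 *\<^sub>R (2 *\<^sub>R x)" "x + x = 2 *\<^sub>R x"
    by norm+
  ultimately show ?thesis unfolding Dop_def by (simp only: diff_self) norm
qed

lemma norm_Dop_dilation_diff_le:
  fixes f :: "'a::real_normed_vector \<Rightarrow> 'b::real_normed_vector"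
  assumes approx: "\<And>x y. norm (Dop f x y) \<le> \<theta> * norm x ^ r * norm y ^ s"
  shows "norm (Dop (\<lambda>x. f (2 *\<^sub>R x) - k *\<^sub>R f x) x y)
    \<le> (2 ^ (r + s) + \<bar>k\<bar>) * \<theta> * norm x ^ r * norm y ^ s"
proof -
  have "Dop (\<lambda>x. f (2 *\<^sub>R x) - k *\<^sub>R f x) x y = Dop f (2 *\<^sub>R x) (2 *\<^sub>R y) - k *\<^sub>R Dop f x y"
    unfolding Dop_def by (simp add: algebra_simps)
  then have "norm (Dop (\<lambda>x. f (2 *\<^sub>R x) - k *\<^sub>R f x) x y)
      \<le> norm (Dop f (2 *\<^sub>R x) (2 *\<^sub>R y)) + \<bar>k\<bar> * norm (Dop f x y)"
    by (metis norm_scaleR norm_triangle_ineq4)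
  also have "\<dots> \<le> \<theta> * norm (2 *\<^sub>R x) ^ r * norm (2 *\<^sub>R y) ^ s + \<bar>k\<bar> * (\<theta> * norm x ^ r * norm y ^ s)"
    by (intro add_mono mult_left_mono approx) simp_all
  also have "\<dots> = (2 ^ (r + s) + \<bar>k\<bar>) * \<theta> * norm x ^ r * norm y ^ s"
    by (simp add: power_mult_distrib power_add algebra_simps)
  finally show ?thesis .
qed

lemma additive_cubic_approximation:
  fixes f :: "'a::real_normed_vector \<Rightarrow> 'b::banach" and r s :: nat and \<theta> :: real
  assumes p: "r + s \<noteq> 1" "r + s \<noteq> 3"
    and odd: "\<And>x. f (- x) = - f x"
    and approx: "\<And>x y. norm (Dop f x y) \<le> \<theta> * norm x ^ r * norm y ^ s"
  obtains A C where "Modules.additive A" and "cubic C"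
    and "\<And>x. norm (f x - A x - C x)
      \<le> \<theta> / 12 * (1 / \<bar>(2::real) ^ (r + s) - 2\<bar> + 1 / \<bar>(2::real) ^ (r + s) - 8\<bar>) * norm x ^ (r + s)"
proof -
  define g where "g x = f (2 *\<^sub>R x) - 8 *\<^sub>R f x" for x
  define h where "h x = f (2 *\<^sub>R x) - 2 *\<^sub>R f x" for x
  have diag: "norm (f (2 *\<^sub>R (2 *\<^sub>R x)) - 10 *\<^sub>R f (2 *\<^sub>R x) + 16 *\<^sub>R f x) \<le> \<theta> / 2 * norm x ^ (r + s)" for x
    using approx[of x x] unfolding Dop_diagonal[of f, OF odd] by (simp add: power_add mult.assoc)
  have "g (2 *\<^sub>R x) - 2 *\<^sub>R g x = f (2 *\<^sub>R (2 *\<^sub>R x)) - 10 *\<^sub>R f (2 *\<^sub>R x) + 16 *\<^sub>R f x"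
    and "h (2 *\<^sub>R x) - 8 *\<^sub>R h x = f (2 *\<^sub>R (2 *\<^sub>R x)) - 10 *\<^sub>R f (2 *\<^sub>R x) + 16 *\<^sub>R f x" for x
    unfolding g_def h_def by norm+
  with diag have g_dbl: "norm (g (2 *\<^sub>R x) - 2 *\<^sub>R g x) \<le> \<theta> / 2 * norm x ^ (r + s)"
    and h_dbl: "norm (h (2 *\<^sub>R x) - 8 *\<^sub>R h x) \<le> \<theta> / 2 * norm x ^ (r + s)" for x
    by metis+
  have g_odd: "g (- x) = - g x" and h_odd: "h (- x) = - h x" for x
    unfolding g_def h_def using odd by (simp_all add: algebra_simps)
  have g_approx: "norm (Dop g x y) \<le> (2 ^ (r + s) + 8) * \<theta> * norm x ^ r * norm y ^ s"
    and h_approx: "norm (Dop h x y) \<le> (2 ^ (r + s) + 2) * \<theta> * norm x ^ r * norm y ^ s" for x y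
    using norm_Dop_dilation_diff_le[OF approx, of 8 x y] norm_Dop_dilation_diff_le[OF approx, of 2 x y]
    unfolding g_def[abs_def] h_def[abs_def] by simp_all
  have "(2::real) ^ (r + s) \<noteq> 2 ^ 1" and "(2::real) ^ (r + s) \<noteq> 2 ^ 3"
    using p by (simp_all only: power_inject_exp) simp_all
  then have ne2: "(2::real) ^ (r + s) \<noteq> 2" and ne8: "(2::real) ^ (r + s) \<noteq> 8" by simp_all
  have two: "(0::real) < 2" and eight: "(0::real) < 8" by simp_all
  obtain A0 where A0: "\<And>x. A0 (- x) = - A0 x" "\<And>x y. Dop A0 x y = 0" "\<And>x. A0 (2 *\<^sub>R x) = 2 *\<^sub>R A0 x"
     "\<And>x. norm (g x - A0 x) \<le> \<theta> / 2 / \<bar>2 - 2 ^ (r + s)\<bar> * norm x ^ (r + s)"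
    using Dop_doubling_stability[OF two ne2 g_dbl g_odd g_approx] by blast
  obtain C0 where C0: "\<And>x. C0 (- x) = - C0 x" "\<And>x y. Dop C0 x y = 0" "\<And>x. C0 (2 *\<^sub>R x) = 8 *\<^sub>R C0 x"
     "\<And>x. norm (h x - C0 x) \<le> \<theta> / 2 / \<bar>8 - 2 ^ (r + s)\<bar> * norm x ^ (r + s)"
    using Dop_doubling_stability[OF eight ne8 h_dbl h_odd h_approx] by blast
  show thesis
  proof
    show "Modules.additive (\<lambda>x. (- 1/6) *\<^sub>R A0 x)"
      by (intro additive_scaleR additive_if_Dop_eq_0 A0)
    show "cubic (\<lambda>x. (1/6) *\<^sub>R C0 x)"
      by (intro cubic_scaleR cubic_if_Dop_eq_0 C0)
    fix x
    have "f x - (- 1/6) *\<^sub>R A0 x - (1/6) *\<^sub>R C0 x = (1/6) *\<^sub>R ((h x - C0 x) - (g x - A0 x))"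
      unfolding g_def h_def by norm
    then have "norm (f x - (- 1/6) *\<^sub>R A0 x - (1/6) *\<^sub>R C0 x) \<le> (1/6) * (norm (h x - C0 x) + norm (g x - A0 x))"
      by (simp add: norm_triangle_ineq4)
    also have "\<dots> \<le> (1/6) * (\<theta> / 2 / \<bar>8 - 2 ^ (r + s)\<bar> * norm x ^ (r + s) + \<theta> / 2 / \<bar>2 - 2 ^ (r + s)\<bar> * norm x ^ (r + s))"
      using A0(4) C0(4) by (intro mult_left_mono add_mono) auto
    also have "\<dots> = \<theta> / 12 * (1 / \<bar>(2::real) ^ (r + s) - 2\<bar> + 1 / \<bar>(2::real) ^ (r + s) - 8\<bar>) * norm x ^ (r + s)"
      by (simp add: abs_minus_commute algebra_simps)
    finally show "norm (f x - (- 1/6) *\<^sub>R A0 x - (1/6) *\<^sub>R C0 x)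
      \<le> \<theta> / 12 * (1 / \<bar>(2::real) ^ (r + s) - 2\<bar> + 1 / \<bar>(2::real) ^ (r + s) - 8\<bar>) * norm x ^ (r + s)" .
  qed
qed

theorem corollary3p5:
  fixes f :: "'a::real_normed_vector \<Rightarrow> 'b::banach"
    and r s :: nat and \<theta> :: real
  assumes theta_nonneg: "\<theta> \<ge> 0"
    and p_ne1: "r + s \<noteq> 1" and p_ne3: "r + s \<noteq> 3"
    and odd: "\<And>x. f (- x) = - f x"
    and approx: "\<And>x y. norm (Dop f x y) \<le> \<theta> * norm x ^ r * norm y ^ s"
  shows "\<exists>!AC. Modules.additive (fst AC) \<and> cubic (snd AC) \<and>
           (\<forall>x. norm (f x - fst AC x - snd AC x)
                 \<le> \<theta> / 12 * (1 / \<bar>(2::real) ^ (r + s) - 2\<bar> + 1 / \<bar>(2::real) ^ (r + s) - 8\<bar>) * norm x ^ (r + s))"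
    (is "\<exists>!AC. ?P AC")
proof -
  define K where "K = \<theta> / 12 * (1 / \<bar>(2::real) ^ (r + s) - 2\<bar> + 1 / \<bar>(2::real) ^ (r + s) - 8\<bar>)"
  obtain A C where A: "Modules.additive A" and C: "cubic C"
    and est: "\<And>x. norm (f x - A x - C x) \<le> K * norm x ^ (r + s)"
    using additive_cubic_approximation[OF p_ne1 p_ne3 odd approx] unfolding K_def by blast
  show ?thesis
  proof (rule ex1I[of _ "(A, C)"])
    show "?P (A, C)" using A C est unfolding K_def by simp
  next
    fix AC
    assume "?P AC"
    then have A': "Modules.additive (fst AC)" and C': "cubic (snd AC)"
      and est': "\<And>x. norm (f x - fst AC x - snd AC x) \<le> K * norm x ^ (r + s)"
      unfolding K_def by auto
    have "norm ((fst AC x - A x) + (snd AC x - C x)) \<le> (2 * K) * norm x ^ (r + s)" for x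
    proof -
      have "(fst AC x - A x) + (snd AC x - C x) = (f x - A x - C x) - (f x - fst AC x - snd AC x)"
        by simp
      then have "norm ((fst AC x - A x) + (snd AC x - C x))
          \<le> norm (f x - A x - C x) + norm (f x - fst AC x - snd AC x)"
        by (metis norm_triangle_ineq4)
      with est[of x] est'[of x] show ?thesis by simp
    qed
    from additive_plus_cubic_eq_0[OF additive_diff[OF A' A] cubic_diff[OF C' C] p_ne1 p_ne3 this]
    show "AC = (A, C)" by (simp add: prod_eq_iff fun_eq_iff)
  qed
qed

end
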